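(* Assume $J$ with domain $\mathcal F(\Gamma)$ is not essentially selfadjoint in $\ell^2(\Gamma)$. Fix a vertex $x_0$ with $\ell(x_0)=0$ and a nonreal $z\in\mathbb C$. Let $u:\Gamma\to\mathbb C$ satisfy $u\neq0$, $u(x_0)=0$ and $(Ju)(x)=zu(x)$ for all $x\neq x_0$. Then $u\in\ell^2(\Gamma)$.
   Context: Let $\Gamma$ be an infinite connected tree whose vertices are arranged in levels $\ell(x)\in\{0,1,2,\dots\}$: every vertex $x$ is adjacent to exactly one vertex $x'$ with $\ell(x')=\ell(x)+1$; for $\ell(x)\ge 1$ the set $N_x=\{y:\ y'=x\}$ of neighbours of $x$ on level $\ell(x)-1$ is finite and nonempty; $N_x=\emptyset$ if $\ell(x)=0$; there are no other edges. Fix $\lambda_x>0$, $\beta_x\in\mathbb R$. The Jacobi matrix $J$ acts on functions $v:\Gamma\to\mathbb C$ by $(Jv)(x)=\lambda_x v(x')+\beta_x v(x)+\sum_{y\in N_x}\lambda_y v(y)$. $\mathcal F(\Gamma)$ denotes the finitely supported functions; $J$ with domain $\mathcal F(\Gamma)$ is symmetric in $\ell^2(\Gamma)$. *)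

theory Defs
  imports "HOL-Analysis.Analysis"
begin

text \<open>The tree: vertices are the elements of the type 'a; lev is the level function,
  par x is the unique neighbour x' of x on the next level. Edges are exactly x -- par x.\<close>

definition children :: "('a \<Rightarrow> 'a) \<Rightarrow> 'a \<Rightarrow> 'a set" where
  "children par x = {y. par y = x}"

definition level_tree :: "('a \<Rightarrow> nat) \<Rightarrow> ('a \<Rightarrow> 'a) \<Rightarrow> bool" where
  "level_tree lev par \<longleftrightarrow>
     infinite (UNIV :: 'a set) \<and>
     (\<forall>x. lev (par x) = Suc (lev x)) \<and>
     (\<forall>x. lev x \<ge> 1 \<longrightarrow> finite (children par x) \<and> children par x \<noteq> {}) \<and>
     (\<forall>x. lev x = 0 \<longrightarrow> children par x = {}) \<and>
     (\<forall>x y. \<exists>n m. (par ^^ n) x = (par ^^ m) y)"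

definition jacobi :: "('a \<Rightarrow> 'a) \<Rightarrow> ('a \<Rightarrow> real) \<Rightarrow> ('a \<Rightarrow> real) \<Rightarrow> ('a \<Rightarrow> complex) \<Rightarrow> 'a \<Rightarrow> complex" where
  "jacobi par lam bet v x =
     complex_of_real (lam x) * v (par x) + complex_of_real (bet x) * v x
     + (\<Sum>y\<in>children par x. complex_of_real (lam y) * v y)"

definition fin_supp :: "('a \<Rightarrow> complex) set" where
  "fin_supp = {v. finite {x. v x \<noteq> 0}}"

definition l2 :: "('a \<Rightarrow> complex) set" where
  "l2 = {v. (\<lambda>x. (cmod (v x))\<^sup>2) summable_on UNIV}"

definition l2_inner :: "('a \<Rightarrow> complex) \<Rightarrow> ('a \<Rightarrow> complex) \<Rightarrow> complex" where
  "l2_inner v w = infsum (\<lambda>x. v x * cnj (w x)) UNIV"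

definition l2_norm :: "('a \<Rightarrow> complex) \<Rightarrow> real" where
  "l2_norm v = sqrt (infsum (\<lambda>x. (cmod (v x))\<^sup>2) UNIV)"

text \<open>Operators in l^2 are represented by their graphs (sets of pairs (v, Tv)).\<close>

definition adjoint_graph :: "(('a \<Rightarrow> complex) \<times> ('a \<Rightarrow> complex)) set \<Rightarrow> (('a \<Rightarrow> complex) \<times> ('a \<Rightarrow> complex)) set" where
  "adjoint_graph G = {(w, g). w \<in> l2 \<and> g \<in> l2 \<and> (\<forall>(v, h)\<in>G. l2_inner h w = l2_inner v g)}"

definition closure_graph :: "(('a \<Rightarrow> complex) \<times> ('a \<Rightarrow> complex)) set \<Rightarrow> (('a \<Rightarrow> complex) \<times> ('a \<Rightarrow> complex)) set" where
  "closure_graph G = {(w, g). w \<in> l2 \<and> g \<in> l2 \<and>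
     (\<exists>s :: nat \<Rightarrow> ('a \<Rightarrow> complex) \<times> ('a \<Rightarrow> complex). (\<forall>n. s n \<in> G) \<and>
        (\<lambda>n. l2_norm (\<lambda>x. fst (s n) x - w x)) \<longlonglongrightarrow> 0 \<and>
        (\<lambda>n. l2_norm (\<lambda>x. snd (s n) x - g x)) \<longlonglongrightarrow> 0)}"

definition selfadjoint_graph :: "(('a \<Rightarrow> complex) \<times> ('a \<Rightarrow> complex)) set \<Rightarrow> bool" where
  "selfadjoint_graph G \<longleftrightarrow> G = adjoint_graph G"

definition essentially_selfadjoint :: "(('a \<Rightarrow> complex) \<times> ('a \<Rightarrow> complex)) set \<Rightarrow> bool" where
  "essentially_selfadjoint G \<longleftrightarrow> selfadjoint_graph (closure_graph G)"

definition jacobi_graph :: "('a \<Rightarrow> 'a) \<Rightarrow> ('a \<Rightarrow> real) \<Rightarrow> ('a \<Rightarrow> real) \<Rightarrow> (('a \<Rightarrow> complex) \<times> ('a \<Rightarrow> complex)) set" where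
  "jacobi_graph par lam bet = {(v, jacobi par lam bet v) | v. v \<in> fin_supp}"

end

theory Submission
  imports Defs
begin

text \<open>If \<open>J\<close> is not essentially selfadjoint, von Neumann's criterion yields a nonzero
  \<open>w \<in> \<ell>\<^sup>2\<close> with \<open>J w = z w\<close>; a single nonreal \<open>z\<close> suffices because \<open>J\<close> has real
  coefficients and so commutes with complex conjugation. Summation by parts over the finite
  subtree \<open>D\<close> below a vertex \<open>y\<close> gives \<open>Im \<Sum>\<^sub>D (J g) g\<^sup>* = \<lambda>\<^sub>y Im (g(y') g(y)\<^sup>*)\<close>, so an
  eigenfunction vanishing at \<open>y\<close> or at \<open>y'\<close> vanishes on \<open>D\<close>. Hence \<open>w(x\<^sub>0) \<noteq> 0\<close>, and
  \<open>w(y') \<noteq> 0\<close> whenever \<open>x\<^sub>0 \<in> D\<close>. On such a \<open>D\<close> the function \<open>g = u + a w\<close> with \<open>g(y') = 0\<close>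
  satisfies \<open>|Im z| \<Sum>\<^sub>D |g|\<^sup>2 \<le> |(J u - z u)(x\<^sub>0)| |g(x\<^sub>0)|\<close>, which bounds both \<open>\<Sum>\<^sub>D |g|\<^sup>2\<close>
  and \<open>|a|\<close> independently of \<open>D\<close>; since the subtrees containing \<open>x\<^sub>0\<close> exhaust \<Gamma>, \<open>u \<in> \<ell>\<^sup>2\<close>.\<close>

section \<open>Square-summable functions\<close>

lemma has_sum_finite_support:
  assumes "finite S" "\<And>x. x \<notin> S \<Longrightarrow> f x = 0"
  shows "(f has_sum sum f S) UNIV"
  by (rule has_sum_finite_neutralI) (use assms in auto)

lemma l2_norm_nonneg: "l2_norm f \<ge> 0"
  unfolding l2_norm_def by (simp add: infsum_nonneg)

lemma l2_norm_power2: "(l2_norm f)\<^sup>2 = (\<Sum>\<^sub>\<infinity>x. (cmod (f x))\<^sup>2)"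
  unfolding l2_norm_def by (simp add: infsum_nonneg)

lemma l2_has_sum_norm_power2:
  assumes "f \<in> l2"
  shows "((\<lambda>x. (cmod (f x))\<^sup>2) has_sum (l2_norm f)\<^sup>2) UNIV"
  using assms unfolding l2_norm_power2 l2_def by simp

lemma L2_set_le_l2_norm:
  assumes "f \<in> l2" "finite F"
  shows "L2_set (\<lambda>x. cmod (f x)) F \<le> l2_norm f"
  using assms unfolding L2_set_def l2_norm_def l2_def
  by (simp add: finite_sum_le_infsum)

lemma l2_L2_set_bounded:
  assumes "\<And>F. finite F \<Longrightarrow> L2_set (\<lambda>x. cmod (f x)) F \<le> B"
  shows "f \<in> l2" and "l2_norm f \<le> B"
proof -
  have B: "B \<ge> 0" using assms[of "{}"] by simp
  have sums: "(\<Sum>x\<in>F. (cmod (f x))\<^sup>2) \<le> B\<^sup>2" if "finite F" for F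
    using assms[OF that] B unfolding L2_set_def by (simp add: real_sqrt_le_iff sqrt_le_D)
  have summable: "(\<lambda>x. (cmod (f x))\<^sup>2) summable_on UNIV"
    by (rule nonneg_bdd_above_summable_on) (auto intro!: bdd_aboveI[where M="B\<^sup>2"] sums)
  then show "f \<in> l2" unfolding l2_def by simp
  have "(\<Sum>\<^sub>\<infinity>x. (cmod (f x))\<^sup>2) \<le> B\<^sup>2"
    by (rule infsum_le_finite_sums[OF summable]) (use sums in auto)
  then show "l2_norm f \<le> B"
    unfolding l2_norm_def using B by (simp add: real_sqrt_le_iff real_le_lsqrt)
qed

lemma norm_le_l2_norm: "f \<in> l2 \<Longrightarrow> cmod (f x) \<le> l2_norm f"
  using L2_set_le_l2_norm[of f "{x}"] by simp

lemma fin_supp_l2: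
  assumes "f \<in> fin_supp"
  shows "f \<in> l2"
proof -
  have "((\<lambda>x. (cmod (f x))\<^sup>2) has_sum (\<Sum>x\<in>{x. f x \<noteq> 0}. (cmod (f x))\<^sup>2)) UNIV"
    using assms unfolding fin_supp_def by (intro has_sum_finite_support) auto
  then show ?thesis unfolding l2_def by (auto dest: has_sum_imp_summable)
qed

lemma fin_supp_linear:
  assumes "v \<in> fin_supp" "w \<in> fin_supp"
  shows "(\<lambda>x. a * v x + b * w x) \<in> fin_supp"
proof -
  have "{x. a * v x + b * w x \<noteq> 0} \<subseteq> {x. v x \<noteq> 0} \<union> {x. w x \<noteq> 0}" by auto
  with assms show ?thesis unfolding fin_supp_def by (auto intro: finite_subset)
qed

lemma indicator_fin_supp: "indicator {x} \<in> fin_supp"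
proof -
  have "{y. indicator {x} y \<noteq> (0 :: complex)} = {x}" by (auto simp: indicator_def)
  then show ?thesis unfolding fin_supp_def by simp
qed

lemma l2_norm_add_le:
  assumes "f \<in> l2" "g \<in> l2"
  shows "(\<lambda>x. f x + g x) \<in> l2" and "l2_norm (\<lambda>x. f x + g x) \<le> l2_norm f + l2_norm g"
proof -
  have "L2_set (\<lambda>x. cmod (f x + g x)) F \<le> l2_norm f + l2_norm g" if F: "finite F" for F
  proof -
    have "L2_set (\<lambda>x. cmod (f x + g x)) F \<le> L2_set (\<lambda>x. cmod (f x) + cmod (g x)) F"
      by (rule L2_set_mono) (auto intro: norm_triangle_ineq)
    also have "\<dots> \<le> L2_set (\<lambda>x. cmod (f x)) F + L2_set (\<lambda>x. cmod (g x)) F"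
      by (rule L2_set_triangle_ineq)
    also have "\<dots> \<le> l2_norm f + l2_norm g"
      using L2_set_le_l2_norm[OF assms(1) F] L2_set_le_l2_norm[OF assms(2) F] by simp
    finally show ?thesis .
  qed
  then show "(\<lambda>x. f x + g x) \<in> l2" and "l2_norm (\<lambda>x. f x + g x) \<le> l2_norm f + l2_norm g"
    by (blast intro: l2_L2_set_bounded)+
qed

lemma l2_norm_scale:
  assumes "f \<in> l2"
  shows "(\<lambda>x. c * f x) \<in> l2" and "l2_norm (\<lambda>x. c * f x) = cmod c * l2_norm f"
proof -
  have summable: "(\<lambda>x. (cmod (f x))\<^sup>2) summable_on UNIV" using assms unfolding l2_def by simp
  have sq: "(cmod (c * f x))\<^sup>2 = (cmod c)\<^sup>2 * (cmod (f x))\<^sup>2" for x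
    by (simp add: norm_mult power_mult_distrib)
  show "(\<lambda>x. c * f x) \<in> l2"
    using summable_on_cmult_right[OF summable] by (simp add: l2_def sq)
  show "l2_norm (\<lambda>x. c * f x) = cmod c * l2_norm f"
    unfolding l2_norm_def sq infsum_cmult_right[OF summable] by (simp add: real_sqrt_mult)
qed

lemma l2_diff:
  assumes "f \<in> l2" "g \<in> l2"
  shows "(\<lambda>x. f x - g x) \<in> l2"
  using l2_norm_add_le(1)[OF assms(1) l2_norm_scale(1)[OF assms(2), of "-1"]] by simp

lemma l2_norm_minus_commute: "l2_norm (\<lambda>x. f x - g x) = l2_norm (\<lambda>x. g x - f x)"
  unfolding l2_norm_def by (simp add: norm_minus_commute)

lemma l2_norm_diff_triangle:
  assumes "f \<in> l2" "g \<in> l2" "h \<in> l2"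
  shows "l2_norm (\<lambda>x. f x - h x) \<le> l2_norm (\<lambda>x. f x - g x) + l2_norm (\<lambda>x. g x - h x)"
  using l2_norm_add_le(2)[OF l2_diff[OF assms(1,2)] l2_diff[OF assms(2,3)]] by simp

lemma l2_Cauchy_Schwarz:
  assumes "f \<in> l2" "g \<in> l2"
  shows "(\<lambda>x. f x * cnj (g x)) summable_on UNIV" and "cmod (l2_inner f g) \<le> l2_norm f * l2_norm g"
proof -
  have sums: "(\<Sum>x\<in>F. cmod (f x * cnj (g x))) \<le> l2_norm f * l2_norm g" if F: "finite F" for F
  proof -
    have "(\<Sum>x\<in>F. cmod (f x * cnj (g x))) = (\<Sum>x\<in>F. \<bar>cmod (f x)\<bar> * \<bar>cmod (g x)\<bar>)"
      by (simp add: norm_mult)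
    also have "\<dots> \<le> L2_set (\<lambda>x. cmod (f x)) F * L2_set (\<lambda>x. cmod (g x)) F"
      by (rule L2_set_mult_ineq)
    also have "\<dots> \<le> l2_norm f * l2_norm g"
      using L2_set_le_l2_norm[OF assms(1) F] L2_set_le_l2_norm[OF assms(2) F]
      by (intro mult_mono) (auto simp: l2_norm_nonneg)
    finally show ?thesis .
  qed
  have abs_summable: "(\<lambda>x. cmod (f x * cnj (g x))) summable_on UNIV"
    by (rule nonneg_bdd_above_summable_on) (auto intro!: bdd_aboveI sums)
  then show "(\<lambda>x. f x * cnj (g x)) summable_on UNIV"
    by (rule abs_summable_summable)
  have "cmod (l2_inner f g) \<le> (\<Sum>\<^sub>\<infinity>x. cmod (f x * cnj (g x)))"
    unfolding l2_inner_def by (rule norm_infsum_bound[OF abs_summable])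
  also have "\<dots> \<le> l2_norm f * l2_norm g"
    by (rule infsum_le_finite_sums[OF abs_summable sums])
  finally show "cmod (l2_inner f g) \<le> l2_norm f * l2_norm g" .
qed

lemma l2_has_sum_inner:
  assumes "f \<in> l2" "g \<in> l2"
  shows "((\<lambda>x. f x * cnj (g x)) has_sum l2_inner f g) UNIV"
  using l2_Cauchy_Schwarz(1)[OF assms] unfolding l2_inner_def by simp

lemma l2_inner_commute: "l2_inner f g = cnj (l2_inner g f)"
  unfolding l2_inner_def by (simp flip: infsum_cnj add: mult.commute)

lemma l2_inner_self:
  assumes "f \<in> l2"
  shows "l2_inner f f = complex_of_real ((l2_norm f)\<^sup>2)"
proof -
  have "((\<lambda>x. complex_of_real ((cmod (f x))\<^sup>2)) has_sum complex_of_real ((l2_norm f)\<^sup>2)) UNIV"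
    by (rule has_sum_of_real[OF l2_has_sum_norm_power2[OF assms]])
  then show ?thesis unfolding l2_inner_def complex_norm_square by (rule infsumI)
qed

lemma l2_inner_scale_left:
  assumes "f \<in> l2" "g \<in> l2"
  shows "l2_inner (\<lambda>x. c * f x) g = c * l2_inner f g"
  unfolding l2_inner_def using l2_Cauchy_Schwarz(1)[OF assms]
  by (simp add: mult.assoc infsum_cmult_right)

lemma l2_inner_diff_left:
  assumes "f \<in> l2" "g \<in> l2" "h \<in> l2"
  shows "l2_inner (\<lambda>x. f x - g x) h = l2_inner f h - l2_inner g h"
proof -
  have "l2_inner (\<lambda>x. f x - g x) h = (\<Sum>\<^sub>\<infinity>x. f x * cnj (h x) + - (g x * cnj (h x)))"
    unfolding l2_inner_def by (simp add: left_diff_distrib)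
  also have "\<dots> = l2_inner f h + (\<Sum>\<^sub>\<infinity>x. - (g x * cnj (h x)))"
    unfolding l2_inner_def using l2_Cauchy_Schwarz(1)[OF assms(1,3)] l2_Cauchy_Schwarz(1)[OF assms(2,3)]
    by (intro infsum_add) (auto simp: summable_on_uminus)
  finally show ?thesis unfolding l2_inner_def by (simp add: infsum_uminus)
qed

lemma l2_inner_diff_right:
  assumes "f \<in> l2" "g \<in> l2" "h \<in> l2"
  shows "l2_inner h (\<lambda>x. f x - g x) = l2_inner h f - l2_inner h g"
  using l2_inner_diff_left[OF assms] by (subst (1 2 3) l2_inner_commute) simp

lemma l2_inner_eq_sum:
  assumes "finite D" "\<And>x. x \<notin> D \<Longrightarrow> f x = 0"
  shows "l2_inner f g = (\<Sum>x\<in>D. f x * cnj (g x))"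
  unfolding l2_inner_def using assms by (intro infsumI has_sum_finite_support) auto

lemma l2_inner_indicator_left: "l2_inner (indicator {x}) g = cnj (g x)"
  by (subst l2_inner_eq_sum[of "{x}"]) auto

lemma l2_inner_indicator_right: "l2_inner f (\<lambda>y. c * indicator {x} y) = f x * cnj c"
  by (subst l2_inner_commute, subst l2_inner_eq_sum[of "{x}"]) auto

lemma l2_inner_tendsto_left:
  assumes "f \<in> l2" "\<And>n. s n \<in> l2" "g \<in> l2"
    and "(\<lambda>n. l2_norm (\<lambda>x. s n x - f x)) \<longlonglongrightarrow> 0"
  shows "(\<lambda>n. l2_inner (s n) g) \<longlonglongrightarrow> l2_inner f g"
proof -
  have "norm (l2_inner (s n) g - l2_inner f g) \<le> l2_norm (\<lambda>x. s n x - f x) * l2_norm g" for n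
    using l2_Cauchy_Schwarz(2)[OF l2_diff[OF assms(2,1)] assms(3)] l2_inner_diff_left[OF assms(2,1,3)]
    by simp
  then have "(\<lambda>n. l2_inner (s n) g - l2_inner f g) \<longlonglongrightarrow> 0"
    by (intro Lim_null_comparison[OF always_eventually tendsto_mult_left_zero[OF assms(4)]]) auto
  then show ?thesis by (rule LIM_zero_cancel)
qed

lemma l2_tendsto_pointwise:
  assumes "f \<in> l2" "\<And>n. s n \<in> l2" "(\<lambda>n. l2_norm (\<lambda>x. s n x - f x)) \<longlonglongrightarrow> 0"
  shows "(\<lambda>n. s n x) \<longlonglongrightarrow> f x"
proof -
  have "(\<lambda>n. s n x - f x) \<longlonglongrightarrow> 0"
    using norm_le_l2_norm[OF l2_diff[OF assms(2,1)]]
    by (intro Lim_null_comparison[OF always_eventually assms(3)]) simp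
  then show ?thesis by (rule LIM_zero_cancel)
qed

lemma l2_tendsto_Cauchy:
  assumes "\<And>n. s n \<in> l2" "f \<in> l2" "(\<lambda>n. l2_norm (\<lambda>x. s n x - f x)) \<longlonglongrightarrow> 0" "e > 0"
  shows "\<exists>N. \<forall>m\<ge>N. \<forall>n\<ge>N. l2_norm (\<lambda>x. s m x - s n x) < e"
proof -
  obtain N where N: "\<And>n. n \<ge> N \<Longrightarrow> l2_norm (\<lambda>x. s n x - f x) < e / 2"
    using order_tendstoD(2)[OF assms(3), of "e / 2"] \<open>e > 0\<close> by (auto simp: eventually_sequentially)
  have "l2_norm (\<lambda>x. s m x - s n x) < e" if "m \<ge> N" "n \<ge> N" for m n
    using l2_norm_diff_triangle[OF assms(1) assms(2) assms(1), of m n] N[OF that(1)] N[OF that(2)]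
      l2_norm_minus_commute[of f "s n"] by simp
  then show ?thesis by blast
qed

lemma l2_complete:
  assumes l2: "\<And>n. s n \<in> l2"
    and Cauchy: "\<And>e. e > 0 \<Longrightarrow> \<exists>N. \<forall>m\<ge>N. \<forall>n\<ge>N. l2_norm (\<lambda>x. s m x - s n x) < e"
  obtains f where "f \<in> l2" and "(\<lambda>n. l2_norm (\<lambda>x. s n x - f x)) \<longlonglongrightarrow> 0"
proof -
  have "Cauchy (\<lambda>n. s n x)" for x
  proof (rule CauchyI)
    fix e :: real assume "e > 0"
    with Cauchy obtain N where N: "\<And>m n. m \<ge> N \<Longrightarrow> n \<ge> N \<Longrightarrow> l2_norm (\<lambda>x. s m x - s n x) < e"
      by blast
    have "norm (s m x - s n x) < e" if "m \<ge> N" "n \<ge> N" for m n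
      using norm_le_l2_norm[OF l2_diff[OF l2[of m] l2[of n]], of x] N[OF that] by simp
    then show "\<exists>N. \<forall>m\<ge>N. \<forall>n\<ge>N. norm (s m x - s n x) < e" by blast
  qed
  then have pointwise: "(\<lambda>n. s n x) \<longlonglongrightarrow> lim (\<lambda>n. s n x)" for x
    by (simp add: Cauchy_convergent_iff convergent_LIMSEQ_iff)
  define f where "f x = lim (\<lambda>n. s n x)" for x
  have close: "(\<lambda>x. s n x - f x) \<in> l2" "l2_norm (\<lambda>x. s n x - f x) \<le> e"
    if N: "\<And>m n. m \<ge> N \<Longrightarrow> n \<ge> N \<Longrightarrow> l2_norm (\<lambda>x. s m x - s n x) < e" and "n \<ge> N" for N n e
  proof -
    have "L2_set (\<lambda>x. cmod (s n x - f x)) F \<le> e" if F: "finite F" for F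
    proof (rule LIMSEQ_le_const2)
      show "(\<lambda>m. L2_set (\<lambda>x. cmod (s n x - s m x)) F) \<longlonglongrightarrow> L2_set (\<lambda>x. cmod (s n x - f x)) F"
        unfolding L2_set_def f_def by (intro tendsto_intros pointwise)
      have "L2_set (\<lambda>x. cmod (s n x - s m x)) F \<le> e" if "m \<ge> N" for m
        using L2_set_le_l2_norm[OF l2_diff[OF l2[of n] l2[of m]] F] N[OF \<open>n \<ge> N\<close> that] by simp
      then show "\<exists>M. \<forall>m\<ge>M. L2_set (\<lambda>x. cmod (s n x - s m x)) F \<le> e" by blast
    qed
    then show "(\<lambda>x. s n x - f x) \<in> l2" "l2_norm (\<lambda>x. s n x - f x) \<le> e"
      by (blast intro: l2_L2_set_bounded)+
  qed
  obtain N where N: "\<And>m n. m \<ge> N \<Longrightarrow> n \<ge> N \<Longrightarrow> l2_norm (\<lambda>x. s m x - s n x) < 1"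
    using Cauchy[of 1] by auto
  have "(\<lambda>x. s N x - (s N x - f x)) \<in> l2"
    using l2_diff[OF l2 close(1)[OF N]] by blast
  then have "f \<in> l2" by simp
  moreover have "(\<lambda>n. l2_norm (\<lambda>x. s n x - f x)) \<longlonglongrightarrow> 0"
  proof (rule LIMSEQ_I)
    fix e :: real assume "e > 0"
    then obtain N where N: "\<And>m n. m \<ge> N \<Longrightarrow> n \<ge> N \<Longrightarrow> l2_norm (\<lambda>x. s m x - s n x) < e / 2"
      using Cauchy[of "e / 2"] by auto
    have "norm (l2_norm (\<lambda>x. s n x - f x) - 0) < e" if "n \<ge> N" for n
      using close(2)[OF N that] \<open>e > 0\<close> l2_norm_nonneg[of "\<lambda>x. s n x - f x"] by simp
    then show "\<exists>N. \<forall>n\<ge>N. norm (l2_norm (\<lambda>x. s n x - f x) - 0) < e" by blast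
  qed
  ultimately show thesis by (rule that)
qed

lemma l2_norm_diff_power2:
  assumes "f \<in> l2" "g \<in> l2"
  shows "(l2_norm (\<lambda>x. f x - t * g x))\<^sup>2
    = (l2_norm f)\<^sup>2 - 2 * Re (cnj t * l2_inner f g) + (cmod t)\<^sup>2 * (l2_norm g)\<^sup>2"
proof -
  have pointwise: "(cmod (f x - t * g x))\<^sup>2
      = (cmod (f x))\<^sup>2 + (- 2 * Re (cnj t * (f x * cnj (g x))) + (cmod t)\<^sup>2 * (cmod (g x))\<^sup>2)" for x
    unfolding cmod_power2 by (simp add: power2_eq_square algebra_simps)
  have "((\<lambda>x. (cmod (f x - t * g x))\<^sup>2) has_sum (l2_norm (\<lambda>x. f x - t * g x))\<^sup>2) UNIV"
    using assms by (intro l2_has_sum_norm_power2 l2_diff l2_norm_scale(1))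
  moreover have "((\<lambda>x. (cmod (f x - t * g x))\<^sup>2) has_sum
      (l2_norm f)\<^sup>2 + (- 2 * Re (cnj t * l2_inner f g) + (cmod t)\<^sup>2 * (l2_norm g)\<^sup>2)) UNIV"
    unfolding pointwise using assms
    by (intro has_sum_add has_sum_cmult_right has_sum_Re l2_has_sum_norm_power2 l2_has_sum_inner)
  ultimately have "(l2_norm (\<lambda>x. f x - t * g x))\<^sup>2
      = (l2_norm f)\<^sup>2 + (- 2 * Re (cnj t * l2_inner f g) + (cmod t)\<^sup>2 * (l2_norm g)\<^sup>2)"
    by (rule has_sum_unique)
  then show ?thesis by simp
qed

lemma l2_parallelogram:
  assumes "f \<in> l2" "g \<in> l2"
  shows "(l2_norm (\<lambda>x. f x + g x))\<^sup>2 + (l2_norm (\<lambda>x. f x - g x))\<^sup>2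
    = 2 * (l2_norm f)\<^sup>2 + 2 * (l2_norm g)\<^sup>2"
proof -
  have pointwise: "(cmod (f x + g x))\<^sup>2 + (cmod (f x - g x))\<^sup>2 = 2 * (cmod (f x))\<^sup>2 + 2 * (cmod (g x))\<^sup>2" for x
    unfolding cmod_power2 by (simp add: power2_eq_square algebra_simps)
  have "((\<lambda>x. (cmod (f x + g x))\<^sup>2 + (cmod (f x - g x))\<^sup>2) has_sum
      (l2_norm (\<lambda>x. f x + g x))\<^sup>2 + (l2_norm (\<lambda>x. f x - g x))\<^sup>2) UNIV"
    using assms by (intro has_sum_add l2_has_sum_norm_power2 l2_norm_add_le(1) l2_diff)
  moreover have "((\<lambda>x. (cmod (f x + g x))\<^sup>2 + (cmod (f x - g x))\<^sup>2) has_sum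
      2 * (l2_norm f)\<^sup>2 + 2 * (l2_norm g)\<^sup>2) UNIV"
    unfolding pointwise using assms by (intro has_sum_add has_sum_cmult_right l2_has_sum_norm_power2)
  ultimately show ?thesis by (rule has_sum_unique)
qed

text \<open>Choosing \<open>t = \<epsilon> \<langle>f, g\<rangle>\<close> with small \<open>\<epsilon> > 0\<close> in the expansion of \<open>\<parallel>f - t g\<parallel>\<^sup>2\<close>.\<close>
lemma l2_inner_eq_0_if_minimal:
  assumes "f \<in> l2" "g \<in> l2" and minimal: "\<And>t. l2_norm f \<le> l2_norm (\<lambda>x. f x - t * g x)"
  shows "l2_inner f g = 0"
proof -
  define c where "c = l2_inner f g"
  define e where "e = 1 / ((l2_norm g)\<^sup>2 + 1)"
  have "0 < (l2_norm g)\<^sup>2 + 1" by (simp add: add_nonneg_pos)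
  then have e: "e > 0" "e * (l2_norm g)\<^sup>2 < 1" unfolding e_def by (simp_all add: field_simps)
  have re: "Re (cnj (e * c) * c) = e * (cmod c)\<^sup>2"
    unfolding cmod_power2 by (simp add: power2_eq_square algebra_simps)
  have norm: "(cmod (e * c))\<^sup>2 = e\<^sup>2 * (cmod c)\<^sup>2"
    using e by (simp add: norm_mult power_mult_distrib)
  have "(l2_norm f)\<^sup>2 \<le> (l2_norm (\<lambda>x. f x - (e * c) * g x))\<^sup>2"
    by (intro power_mono minimal l2_norm_nonneg)
  also have "\<dots> = (l2_norm f)\<^sup>2 - e * (cmod c)\<^sup>2 * (2 - e * (l2_norm g)\<^sup>2)"
    unfolding l2_norm_diff_power2[OF assms(1,2)] c_def[symmetric] re norm
    by (simp add: power2_eq_square algebra_simps)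
  finally have "e * (cmod c)\<^sup>2 * (2 - e * (l2_norm g)\<^sup>2) \<le> 0" by simp
  with e have "(cmod c)\<^sup>2 \<le> 0" by (simp add: mult_le_0_iff zero_less_mult_iff)
  then show ?thesis unfolding c_def by simp
qed

lemma l2_minimizing_sequence_Cauchy:
  assumes V: "V \<subseteq> l2" and midpoint: "\<And>v w. v \<in> V \<Longrightarrow> w \<in> V \<Longrightarrow> (\<lambda>x. (v x + w x) / 2) \<in> V"
    and h: "h \<in> l2" and m: "\<And>n. m n \<in> V"
    and lower: "\<And>v. v \<in> V \<Longrightarrow> d \<le> l2_norm (\<lambda>x. h x - v x)"
    and minimizing: "(\<lambda>n. l2_norm (\<lambda>x. h x - m n x)) \<longlonglongrightarrow> d"
    and "e > 0"
  shows "\<exists>N. \<forall>k\<ge>N. \<forall>n\<ge>N. l2_norm (\<lambda>x. m k x - m n x) < e"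
proof -
  have d: "d \<ge> 0"
    by (rule LIMSEQ_le_const[OF minimizing]) (auto simp: l2_norm_nonneg)
  define \<delta> where "\<delta> n = (l2_norm (\<lambda>x. h x - m n x))\<^sup>2 - d\<^sup>2" for n
  have "\<delta> \<longlonglongrightarrow> d\<^sup>2 - d\<^sup>2" unfolding \<delta>_def[abs_def] by (intro tendsto_intros minimizing)
  then have "\<forall>\<^sub>F n in sequentially. \<delta> n < e\<^sup>2 / 4"
    using \<open>e > 0\<close> by (intro order_tendstoD(2)) auto
  then obtain N where N: "\<And>n. n \<ge> N \<Longrightarrow> \<delta> n < e\<^sup>2 / 4" by (auto simp: eventually_sequentially)
  have bound: "(l2_norm (\<lambda>x. m k x - m n x))\<^sup>2 \<le> 2 * \<delta> k + 2 * \<delta> n" for k n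
  proof -
    let ?a = "\<lambda>x. h x - m n x" and ?b = "\<lambda>x. h x - m k x"
    have l2: "?a \<in> l2" "?b \<in> l2" using V h m by (auto intro: l2_diff)
    have "(\<lambda>x. ?a x + ?b x) = (\<lambda>x. 2 * (h x - (m n x + m k x) / 2))"
      by (simp add: fun_eq_iff field_simps)
    then have "l2_norm (\<lambda>x. ?a x + ?b x) = 2 * l2_norm (\<lambda>x. h x - (m n x + m k x) / 2)"
      using l2_norm_scale(2)[OF l2_diff[OF h subsetD[OF V midpoint[OF m m]]], of 2] by simp
    then have "(2 * d)\<^sup>2 \<le> (l2_norm (\<lambda>x. ?a x + ?b x))\<^sup>2"
      using lower[OF midpoint[OF m m]] d by (intro power_mono) auto
    moreover have "(\<lambda>x. ?a x - ?b x) = (\<lambda>x. m k x - m n x)" by simp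
    ultimately show ?thesis
      using l2_parallelogram[OF l2] unfolding \<delta>_def by (simp add: power_mult_distrib)
  qed
  have "(l2_norm (\<lambda>x. m k x - m n x))\<^sup>2 < e\<^sup>2" if "k \<ge> N" "n \<ge> N" for k n
    using bound[of k n] N[OF that(1)] N[OF that(2)] by linarith
  then have "l2_norm (\<lambda>x. m k x - m n x) < e" if "k \<ge> N" "n \<ge> N" for k n
    using power2_less_imp_less[OF _ less_imp_le[OF \<open>e > 0\<close>]] that by blast
  then show ?thesis by blast
qed

text \<open>The projection theorem for the closure of a subspace \<open>V\<close>: \<open>q\<close> is the nearest point.\<close>
lemma l2_projection:
  assumes V: "V \<subseteq> l2" "V \<noteq> {}"
    and linear: "\<And>v w a b. v \<in> V \<Longrightarrow> w \<in> V \<Longrightarrow> (\<lambda>x. a * v x + b * w x) \<in> V"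
    and h: "h \<in> l2"
  obtains m q where "\<And>n. m n \<in> V" "q \<in> l2" "(\<lambda>n. l2_norm (\<lambda>x. m n x - q x)) \<longlonglongrightarrow> 0"
    "\<And>v. v \<in> V \<Longrightarrow> l2_inner (\<lambda>x. h x - q x) v = 0"
proof -
  define D where "D = (\<lambda>v. l2_norm (\<lambda>x. h x - v x)) ` V"
  define d where "d = Inf D"
  have D: "D \<noteq> {}" "bdd_below D"
    using V unfolding D_def by (auto intro!: bdd_belowI[of _ 0] l2_norm_nonneg)
  have lower: "d \<le> l2_norm (\<lambda>x. h x - v x)" if "v \<in> V" for v
    unfolding d_def D_def using D(2) that by (auto intro: cInf_lower simp: D_def)
  obtain s where "\<And>n. s n \<in> D" "s \<longlonglongrightarrow> d"
    using closure_contains_Inf[OF D] unfolding d_def closure_sequential by blast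
  moreover have "\<forall>n. \<exists>v. v \<in> V \<and> s n = l2_norm (\<lambda>x. h x - v x)" if "\<And>n. s n \<in> D"
    using that unfolding D_def by blast
  ultimately obtain m where m: "\<And>n. m n \<in> V" and s: "\<And>n. s n = l2_norm (\<lambda>x. h x - m n x)"
    by metis
  have minimizing: "(\<lambda>n. l2_norm (\<lambda>x. h x - m n x)) \<longlonglongrightarrow> d"
    using \<open>s \<longlonglongrightarrow> d\<close> unfolding s[abs_def] .
  have midpoint: "(\<lambda>x. (v x + w x) / 2) \<in> V" if "v \<in> V" "w \<in> V" for v w
    using linear[OF that, of "1 / 2" "1 / 2"] by (simp add: add_divide_distrib)
  have m_l2: "m n \<in> l2" for n using V m by blast
  obtain q where q: "q \<in> l2" and m_q: "(\<lambda>n. l2_norm (\<lambda>x. m n x - q x)) \<longlonglongrightarrow> 0"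
    using l2_complete[OF m_l2 l2_minimizing_sequence_Cauchy[OF V(1) midpoint h m lower minimizing]]
    by blast
  have "l2_inner (\<lambda>x. h x - q x) v = 0" if v: "v \<in> V" for v
  proof (rule l2_inner_eq_0_if_minimal)
    have hq: "(\<lambda>x. h x - q x) \<in> l2" using h q by (rule l2_diff)
    then show "(\<lambda>x. h x - q x) \<in> l2" .
    show "v \<in> l2" using V v by blast
    fix t
    have "l2_norm (\<lambda>x. h x - q x) \<le> d"
    proof (rule LIMSEQ_le_const)
      show "(\<lambda>n. l2_norm (\<lambda>x. h x - m n x) + l2_norm (\<lambda>x. m n x - q x)) \<longlonglongrightarrow> d"
        using tendsto_add[OF minimizing m_q] by simp
      show "\<exists>N. \<forall>n\<ge>N. l2_norm (\<lambda>x. h x - q x) \<le> l2_norm (\<lambda>x. h x - m n x) + l2_norm (\<lambda>x. m n x - q x)"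
        using l2_norm_diff_triangle[OF h m_l2 q] by blast
    qed
    also have "d \<le> l2_norm (\<lambda>x. h x - q x - t * v x)"
    proof (rule LIMSEQ_le_const)
      show "(\<lambda>n. l2_norm (\<lambda>x. h x - q x - t * v x) + l2_norm (\<lambda>x. q x - m n x)) \<longlonglongrightarrow> l2_norm (\<lambda>x. h x - q x - t * v x)"
        using tendsto_add[OF tendsto_const m_q] by (simp add: l2_norm_minus_commute)
      have "d \<le> l2_norm (\<lambda>x. h x - q x - t * v x) + l2_norm (\<lambda>x. q x - m n x)" for n
      proof -
        have "(\<lambda>x. 1 * m n x + t * v x) \<in> V" by (rule linear[OF m v])
        then have "d \<le> l2_norm (\<lambda>x. (h x - q x - t * v x) + (q x - m n x))"
          using lower by (simp add: algebra_simps)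
        also have "\<dots> \<le> l2_norm (\<lambda>x. h x - q x - t * v x) + l2_norm (\<lambda>x. q x - m n x)"
          using h hq q m_l2 \<open>v \<in> l2\<close>
          by (intro l2_norm_add_le(2) l2_diff l2_norm_scale(1))
        finally show ?thesis .
      qed
      then show "\<exists>N. \<forall>n\<ge>N. d \<le> l2_norm (\<lambda>x. h x - q x - t * v x) + l2_norm (\<lambda>x. q x - m n x)"
        by blast
    qed
    finally show "l2_norm (\<lambda>x. h x - q x) \<le> l2_norm (\<lambda>x. h x - q x - t * v x)" .
  qed
  with m q m_q show thesis by (rule that)
qed

section \<open>Subtrees\<close>

definition subtree :: "('a \<Rightarrow> 'a) \<Rightarrow> 'a \<Rightarrow> 'a set" where
  "subtree par y = {x. \<exists>k. (par ^^ k) x = y}"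

lemma finite_children:
  assumes "level_tree lev par"
  shows "finite (children par x)"
  using assms unfolding level_tree_def by (cases "lev x = 0") auto

lemma level_funpow:
  assumes "level_tree lev par"
  shows "lev ((par ^^ k) x) = lev x + k"
  using assms unfolding level_tree_def by (induction k) auto

lemma subtree_self [simp]: "y \<in> subtree par y"
  unfolding subtree_def by (auto intro: exI[of _ 0])

lemma mem_subtree_if_parent_mem:
  assumes "par c \<in> subtree par y"
  shows "c \<in> subtree par y"
proof -
  obtain k where "(par ^^ k) (par c) = y" using assms unfolding subtree_def by auto
  then have "(par ^^ Suc k) c = y" by (simp add: funpow_swap1)
  then show ?thesis unfolding subtree_def by blast
qed

lemma parent_mem_subtree:
  assumes "x \<in> subtree par y" "x \<noteq> y"
  shows "par x \<in> subtree par y"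
proof -
  obtain k where k: "(par ^^ k) x = y" using assms(1) unfolding subtree_def by auto
  with assms(2) obtain j where "k = Suc j" by (cases k) auto
  with k have "(par ^^ j) (par x) = y" by (simp add: funpow_swap1)
  then show ?thesis unfolding subtree_def by auto
qed

lemma subtree_trans:
  assumes "x \<in> subtree par y" "y \<in> subtree par w"
  shows "x \<in> subtree par w"
proof -
  obtain k j where "(par ^^ k) x = y" "(par ^^ j) y = w" using assms unfolding subtree_def by auto
  then have "(par ^^ (j + k)) x = w" by (simp add: funpow_add)
  then show ?thesis unfolding subtree_def by blast
qed

lemma parent_not_mem_subtree:
  assumes "level_tree lev par"
  shows "par y \<notin> subtree par y"
proof
  assume "par y \<in> subtree par y"
  then obtain k where "(par ^^ k) (par y) = y" unfolding subtree_def by auto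
  then have "lev y = lev (par y) + k" using level_funpow[OF assms, of k "par y"] by simp
  with assms show False unfolding level_tree_def by simp
qed

lemma subtree_eq: "subtree par y = insert y (\<Union>c\<in>children par y. subtree par c)"
proof (intro equalityI subsetI)
  fix x assume "x \<in> subtree par y"
  then obtain k where k: "(par ^^ k) x = y" unfolding subtree_def by auto
  show "x \<in> insert y (\<Union>c\<in>children par y. subtree par c)"
  proof (cases k)
    case 0
    with k show ?thesis by simp
  next
    case (Suc j)
    with k have "par ((par ^^ j) x) = y" by simp
    then have "(par ^^ j) x \<in> children par y" unfolding children_def by simp
    moreover have "x \<in> subtree par ((par ^^ j) x)" unfolding subtree_def by blast
    ultimately show ?thesis by blast
  qed
next
  fix x assume x: "x \<in> insert y (\<Union>c\<in>children par y. subtree par c)"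
  show "x \<in> subtree par y"
  proof (cases "x = y")
    case False
    with x obtain c where c: "par c = y" "x \<in> subtree par c" unfolding children_def by auto
    have "c \<in> subtree par y" using mem_subtree_if_parent_mem[of par c y] c(1) by simp
    with c(2) show ?thesis by (rule subtree_trans)
  qed simp
qed

lemma finite_subtree:
  assumes T: "level_tree lev par"
  shows "finite (subtree par y)"
proof (induction "lev y" arbitrary: y)
  case 0
  with T have "children par y = {}" unfolding level_tree_def by simp
  then show ?case by (subst subtree_eq) simp
next
  case (Suc n)
  have "lev c = n" if "c \<in> children par y" for c
    using that T Suc.hyps(2) unfolding children_def level_tree_def by auto
  with Suc.hyps(1) show ?case
    by (subst subtree_eq) (simp add: finite_children[OF T])
qed

text \<open>Any two vertices have a common ancestor.\<close>
lemma finite_subset_subtree: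
  assumes T: "level_tree lev par" and "finite F"
  shows "\<exists>y. F \<subseteq> subtree par y \<and> (\<forall>x\<in>F. lev x < lev y)"
  using \<open>finite F\<close>
proof (induction F rule: finite_induct)
  case (insert x F)
  then obtain y where y: "F \<subseteq> subtree par y" "\<forall>x\<in>F. lev x < lev y" by blast
  from T obtain n m where nm: "(par ^^ n) x = (par ^^ m) y" unfolding level_tree_def by blast
  define w where "w = par ((par ^^ m) y)"
  have wx: "(par ^^ Suc n) x = w" and wy: "(par ^^ Suc m) y = w" unfolding w_def using nm by simp_all
  then have "x \<in> subtree par w" "y \<in> subtree par w" unfolding subtree_def by blast+
  moreover have "lev x < lev w" "lev y < lev w"
    using level_funpow[OF T, of "Suc n" x] level_funpow[OF T, of "Suc m" y] wx wy by simp_all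
  moreover have "F \<subseteq> subtree par w" using y(1) subtree_trans[OF _ \<open>y \<in> subtree par w\<close>] by blast
  ultimately have "insert x F \<subseteq> subtree par w \<and> (\<forall>v\<in>insert x F. lev v < lev w)"
    using y(2) by auto
  then show ?case by blast
qed simp

section \<open>The Jacobi matrix on finite subtrees\<close>

lemma jacobi_cnj: "jacobi par lam bet (\<lambda>x. cnj (f x)) x = cnj (jacobi par lam bet f x)"
  unfolding jacobi_def by (simp add: cnj_sum)

lemma jacobi_linear:
  "jacobi par lam bet (\<lambda>x. a * f x + b * g x) x = a * jacobi par lam bet f x + b * jacobi par lam bet g x"
  unfolding jacobi_def by (simp add: sum.distrib sum_distrib_left algebra_simps)

lemma jacobi_diff: "jacobi par lam bet (\<lambda>x. f x - g x) x = jacobi par lam bet f x - jacobi par lam bet g x"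
  using jacobi_linear[of par lam bet 1 f "-1" g x] by simp

lemma sum_children_subtree:
  assumes T: "level_tree lev par"
  shows "(\<Sum>x\<in>subtree par y. \<Sum>c\<in>children par x. f c) = (\<Sum>c\<in>subtree par y - {y}. f c)"
proof -
  let ?D = "subtree par y"
  have "children par x = {c \<in> ?D - {y}. par c = x}" if "x \<in> ?D" for x
    using that parent_not_mem_subtree[OF T, of y] mem_subtree_if_parent_mem[of par _ y]
    unfolding children_def by auto
  then have "(\<Sum>x\<in>?D. \<Sum>c\<in>children par x. f c) = (\<Sum>x\<in>?D. \<Sum>c\<in>{c \<in> ?D - {y}. par c = x}. f c)"
    by (intro sum.cong) auto
  also have "\<dots> = (\<Sum>c\<in>?D - {y}. f c)"
    using finite_subtree[OF T] parent_mem_subtree[of _ par y] by (intro sum.group) auto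
  finally show ?thesis .
qed

text \<open>Summation by parts on the finite subtree below \<open>y\<close>: every edge \<open>c -- par c\<close> inside it
  contributes symmetrically, and only the edge from \<open>y\<close> to its parent leaves a boundary term.\<close>
lemma jacobi_sum_subtree:
  assumes T: "level_tree lev par"
  shows "(\<Sum>x\<in>subtree par y. jacobi par lam bet f x * g x) =
    (\<Sum>c\<in>subtree par y - {y}. complex_of_real (lam c) * (f (par c) * g c + f c * g (par c)))
    + (\<Sum>x\<in>subtree par y. complex_of_real (bet x) * f x * g x)
    + complex_of_real (lam y) * f (par y) * g y"
proof -
  let ?D = "subtree par y"
  have up: "(\<Sum>x\<in>?D. lam x * f (par x) * g x)
      = (\<Sum>c\<in>?D - {y}. lam c * f (par c) * g c) + lam y * f (par y) * g y"
    using sum.remove[OF finite_subtree[OF T] subtree_self[of y par]] by (simp add: add.commute)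
  have down: "(\<Sum>x\<in>?D. (\<Sum>c\<in>children par x. lam c * f c) * g x) = (\<Sum>c\<in>?D - {y}. lam c * f c * g (par c))"
    unfolding sum_distrib_right sum_children_subtree[OF T, symmetric]
    by (intro sum.cong) (auto simp: children_def)
  show ?thesis
    unfolding jacobi_def distrib_right sum.distrib up down
    by (simp add: sum.distrib distrib_left algebra_simps)
qed

lemma Im_jacobi_sum_subtree:
  assumes "level_tree lev par"
  shows "Im (\<Sum>x\<in>subtree par y. jacobi par lam bet f x * cnj (f x)) = lam y * Im (f (par y) * cnj (f y))"
proof -
  have "Im (complex_of_real (lam c) * (f (par c) * cnj (f c) + f c * cnj (f (par c)))) = 0"
    "Im (complex_of_real (bet x) * f x * cnj (f x)) = 0" for c x
    by (simp_all add: algebra_simps)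
  then show ?thesis
    unfolding jacobi_sum_subtree[OF assms] by (simp add: Im_sum mult.assoc)
qed

lemma jacobi_sum_subtree_commute:
  assumes "level_tree lev par" "f y = 0" "f (par y) = 0"
  shows "(\<Sum>x\<in>subtree par y. g x * jacobi par lam bet f x) = (\<Sum>x\<in>subtree par y. jacobi par lam bet g x * f x)"
  using jacobi_sum_subtree[OF assms(1), of lam bet f g] jacobi_sum_subtree[OF assms(1), of lam bet g f] assms(2,3)
  by (simp add: mult.commute add.commute mult.left_commute)

lemma eigenfunction_vanishes_on_subtree:
  assumes T: "level_tree lev par" and z: "Im z \<noteq> 0"
    and eigen: "\<And>x. x \<in> subtree par y \<Longrightarrow> jacobi par lam bet w x = z * w x"
    and boundary: "w (par y) = 0 \<or> w y = 0"
  shows "\<forall>x\<in>subtree par y. w x = 0"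
proof -
  let ?D = "subtree par y"
  have "(\<Sum>x\<in>?D. jacobi par lam bet w x * cnj (w x)) = z * (\<Sum>x\<in>?D. w x * cnj (w x))"
    using eigen by (simp add: sum_distrib_left mult.assoc)
  also have "(\<Sum>x\<in>?D. w x * cnj (w x)) = complex_of_real (\<Sum>x\<in>?D. (cmod (w x))\<^sup>2)"
    by (simp only: of_real_sum complex_norm_square)
  finally have "(\<Sum>x\<in>?D. jacobi par lam bet w x * cnj (w x)) = z * complex_of_real (\<Sum>x\<in>?D. (cmod (w x))\<^sup>2)" .
  moreover have "Im (\<Sum>x\<in>?D. jacobi par lam bet w x * cnj (w x)) = 0"
    unfolding Im_jacobi_sum_subtree[OF T] using boundary by auto
  ultimately have "(\<Sum>x\<in>?D. (cmod (w x))\<^sup>2) = 0" using z by simp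
  then show ?thesis using finite_subtree[OF T] by (simp add: sum_nonneg_eq_0_iff)
qed

text \<open>Vanishing propagates up the spine \<open>x\<^sub>0, par x\<^sub>0, par (par x\<^sub>0), \<dots>\<close>: if \<open>w\<close> vanishes on the
  subtree below a spine vertex, the eigenvalue equation there forces \<open>w\<close> to vanish at its parent
  (as \<open>\<lambda> > 0\<close>), hence on the next subtree. These subtrees exhaust the tree.\<close>
lemma eigenfunction_eq_0:
  assumes T: "level_tree lev par" and lam: "\<And>x. lam x > 0" and z: "Im z \<noteq> 0"
    and eigen: "\<And>x. jacobi par lam bet w x = z * w x" and "w x0 = 0"
  shows "w = (\<lambda>x. 0)"
proof -
  have "\<forall>x\<in>subtree par ((par ^^ n) x0). w x = 0" for n
  proof (induction n)
    case 0
    have "\<forall>x\<in>subtree par x0. w x = 0"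
      by (rule eigenfunction_vanishes_on_subtree[OF T z]) (use eigen \<open>w x0 = 0\<close> in auto)
    then show ?case by simp
  next
    case (Suc n)
    let ?y = "(par ^^ n) x0"
    have "w c = 0" if "c \<in> children par ?y" for c
      using Suc.IH that mem_subtree_if_parent_mem[of par c ?y] unfolding children_def by auto
    then have "complex_of_real (lam ?y) * w (par ?y) = z * w ?y"
      using eigen[of ?y] unfolding jacobi_def using Suc.IH by simp
    then have "w (par ?y) = 0" using Suc.IH lam[of ?y] by simp
    then have "\<forall>x\<in>subtree par (par ?y). w x = 0"
      by (intro eigenfunction_vanishes_on_subtree[OF T z]) (use eigen in auto)
    then show ?case by simp
  qed
  moreover have "\<exists>n. x \<in> subtree par ((par ^^ n) x0)" for x
  proof -
    obtain n m where "(par ^^ n) x = (par ^^ m) x0" using T unfolding level_tree_def by blast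
    then show ?thesis unfolding subtree_def by blast
  qed
  ultimately show ?thesis by (metis (full_types))
qed

lemma fin_supp_in_subtree:
  assumes T: "level_tree lev par" and "v \<in> fin_supp"
  obtains y where "\<And>x. x \<notin> subtree par y - {y} \<Longrightarrow> v x = 0"
proof -
  obtain y where "{x. v x \<noteq> 0} \<subseteq> subtree par y" "\<forall>x\<in>{x. v x \<noteq> 0}. lev x < lev y"
    using finite_subset_subtree[OF T] \<open>v \<in> fin_supp\<close> unfolding fin_supp_def by blast
  then have "v x = 0" if "x \<notin> subtree par y - {y}" for x
    using that by auto
  then show thesis by (rule that)
qed

lemma jacobi_eq_0_outside_subtree:
  assumes T: "level_tree lev par" and supp: "\<And>x. x \<notin> subtree par y - {y} \<Longrightarrow> v x = 0"
    and x: "x \<notin> subtree par y"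
  shows "jacobi par lam bet v x = 0"
proof -
  have "v (par x) = 0" using supp[of "par x"] x mem_subtree_if_parent_mem[of par x y] by blast
  moreover have "v c = 0" if "c \<in> children par x" for c
    using supp[of c] that x parent_mem_subtree[of c par y] unfolding children_def by auto
  ultimately show ?thesis unfolding jacobi_def using supp x by simp
qed

lemma fin_supp_jacobi:
  assumes T: "level_tree lev par" and "v \<in> fin_supp"
  shows "jacobi par lam bet v \<in> fin_supp"
proof -
  obtain y where "\<And>x. x \<notin> subtree par y - {y} \<Longrightarrow> v x = 0"
    using fin_supp_in_subtree[OF assms] by blast
  then have "{x. jacobi par lam bet v x \<noteq> 0} \<subseteq> subtree par y"
    using jacobi_eq_0_outside_subtree[OF T] by blast
  then have "finite {x. jacobi par lam bet v x \<noteq> 0}" using finite_subtree[OF T] by (rule finite_subset)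
  then show ?thesis unfolding fin_supp_def by simp
qed

lemma l2_inner_jacobi:
  assumes T: "level_tree lev par" and "v \<in> fin_supp"
  shows "l2_inner (jacobi par lam bet v) w = l2_inner v (jacobi par lam bet w)"
proof -
  obtain y where supp: "\<And>x. x \<notin> subtree par y - {y} \<Longrightarrow> v x = 0"
    using fin_supp_in_subtree[OF assms] by blast
  let ?D = "subtree par y"
  have "l2_inner (jacobi par lam bet v) w = (\<Sum>x\<in>?D. cnj (w x) * jacobi par lam bet v x)"
    using finite_subtree[OF T] jacobi_eq_0_outside_subtree[OF T supp]
    by (subst l2_inner_eq_sum) (auto simp: mult.commute)
  also have "\<dots> = (\<Sum>x\<in>?D. jacobi par lam bet (\<lambda>x. cnj (w x)) x * v x)"
    using supp parent_not_mem_subtree[OF T] by (intro jacobi_sum_subtree_commute[OF T]) auto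
  also have "\<dots> = l2_inner v (jacobi par lam bet w)"
    using finite_subtree[OF T] supp
    by (subst l2_inner_eq_sum[of ?D]) (auto simp: jacobi_cnj mult.commute)
  finally show ?thesis .
qed

section \<open>The closure of \<open>J\<close>\<close>

lemma closure_graph_jacobiI:
  assumes s: "\<And>n. s n \<in> fin_supp" and "f \<in> l2" "g \<in> l2"
    and "(\<lambda>n. l2_norm (\<lambda>x. s n x - f x)) \<longlonglongrightarrow> 0"
    and "(\<lambda>n. l2_norm (\<lambda>x. jacobi par lam bet (s n) x - g x)) \<longlonglongrightarrow> 0"
  shows "(f, g) \<in> closure_graph (jacobi_graph par lam bet)"
  unfolding closure_graph_def jacobi_graph_def using assms
  by (auto intro!: exI[of _ "\<lambda>n. (s n, jacobi par lam bet (s n))"])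

lemma jacobi_graph_subset_closure:
  assumes T: "level_tree lev par" and "v \<in> fin_supp"
  shows "(v, jacobi par lam bet v) \<in> closure_graph (jacobi_graph par lam bet)"
  using assms fin_supp_l2 fin_supp_jacobi[OF T]
  by (intro closure_graph_jacobiI[where s="\<lambda>n. v"]) (auto simp: l2_norm_def)

lemma closure_graph_jacobi_eq:
  assumes T: "level_tree lev par" and fg: "(f, g) \<in> closure_graph (jacobi_graph par lam bet)"
  shows "g = jacobi par lam bet f"
proof
  fix x
  obtain s where s: "\<And>n. s n \<in> fin_supp" and f: "f \<in> l2" and g: "g \<in> l2"
    and s_f: "(\<lambda>n. l2_norm (\<lambda>x. s n x - f x)) \<longlonglongrightarrow> 0"
    and Js_g: "(\<lambda>n. l2_norm (\<lambda>x. jacobi par lam bet (s n) x - g x)) \<longlonglongrightarrow> 0"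
    using fg unfolding closure_graph_def jacobi_graph_def by (auto dest!: choice) blast
  have "(\<lambda>n. jacobi par lam bet (s n) x) \<longlonglongrightarrow> g x"
    using fin_supp_l2[OF fin_supp_jacobi[OF T s]] by (intro l2_tendsto_pointwise[OF g _ Js_g])
  moreover have "(\<lambda>n. jacobi par lam bet (s n) x) \<longlonglongrightarrow> jacobi par lam bet f x"
    unfolding jacobi_def using s fin_supp_l2
    by (intro tendsto_intros l2_tendsto_pointwise[OF f _ s_f]) auto
  ultimately show "g x = jacobi par lam bet f x" by (rule LIMSEQ_unique)
qed

lemma jacobi_lower_bound:
  assumes T: "level_tree lev par" and f: "f \<in> fin_supp"
  shows "\<bar>Im z\<bar> * l2_norm f \<le> l2_norm (\<lambda>x. jacobi par lam bet f x - z * f x)"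
proof -
  let ?J = "jacobi par lam bet f"
  have l2: "f \<in> l2" "?J \<in> l2" "(\<lambda>x. z * f x) \<in> l2"
    using fin_supp_l2[OF f] fin_supp_l2[OF fin_supp_jacobi[OF T f]] l2_norm_scale(1) by auto
  have "l2_inner ?J f = cnj (l2_inner ?J f)"
    using l2_inner_jacobi[OF T f, of lam bet f] l2_inner_commute[of f ?J] by simp
  then have "Im (l2_inner ?J f) = 0" by (metis cnj.sel(2) neg_equal_zero)
  moreover have "l2_inner (\<lambda>x. ?J x - z * f x) f = l2_inner ?J f - z * complex_of_real ((l2_norm f)\<^sup>2)"
    using l2_inner_diff_left[OF l2(2,3,1)] l2_inner_scale_left[OF l2(1) l2(1)] l2_inner_self[OF l2(1)]
    by simp
  ultimately have "\<bar>Im z\<bar> * (l2_norm f)\<^sup>2 = \<bar>Im (l2_inner (\<lambda>x. ?J x - z * f x) f)\<bar>"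
    by (simp add: abs_mult)
  also have "\<dots> \<le> l2_norm (\<lambda>x. ?J x - z * f x) * l2_norm f"
    using abs_Im_le_cmod l2_Cauchy_Schwarz(2)[OF l2_diff[OF l2(2,3)] l2(1)] by (rule order.trans)
  finally show ?thesis
    using l2_norm_nonneg[of f] l2_norm_nonneg[of "\<lambda>x. ?J x - z * f x"]
    by (cases "l2_norm f = 0") (auto simp: power2_eq_square)
qed

lemma closure_graph_jacobi_symmetric:
  assumes T: "level_tree lev par"
    and wg: "(w, g) \<in> closure_graph (jacobi_graph par lam bet)"
    and vh: "(v, h) \<in> closure_graph (jacobi_graph par lam bet)"
  shows "l2_inner h w = l2_inner v g"
proof -
  obtain s where s: "\<And>n. s n \<in> fin_supp" and v: "v \<in> l2" and h: "h \<in> l2"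
    and s_v: "(\<lambda>n. l2_norm (\<lambda>x. s n x - v x)) \<longlonglongrightarrow> 0"
    and Js_h: "(\<lambda>n. l2_norm (\<lambda>x. jacobi par lam bet (s n) x - h x)) \<longlonglongrightarrow> 0"
    using vh unfolding closure_graph_def jacobi_graph_def by (auto dest!: choice) blast
  have w: "w \<in> l2" and g: "g \<in> l2" using wg unfolding closure_graph_def by auto
  have "l2_inner (jacobi par lam bet (s n)) w = l2_inner (s n) g" for n
    using l2_inner_jacobi[OF T s] closure_graph_jacobi_eq[OF T wg] by simp
  moreover have "(\<lambda>n. l2_inner (jacobi par lam bet (s n)) w) \<longlonglongrightarrow> l2_inner h w"
    using fin_supp_l2[OF fin_supp_jacobi[OF T s]] by (intro l2_inner_tendsto_left[OF h _ w Js_h])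
  moreover have "(\<lambda>n. l2_inner (s n) g) \<longlonglongrightarrow> l2_inner v g"
    using fin_supp_l2[OF s] by (intro l2_inner_tendsto_left[OF v _ g s_v])
  ultimately show ?thesis using LIMSEQ_unique by fastforce
qed

text \<open>Such an \<open>r\<close> satisfies \<open>J r = cnj z r\<close>, so its conjugate is an eigenvector for \<open>z\<close>.\<close>
lemma orthogonal_range_eq_0:
  assumes T: "level_tree lev par"
    and no_eigen: "\<And>w. w \<in> l2 \<Longrightarrow> (\<And>x. jacobi par lam bet w x = z * w x) \<Longrightarrow> w = (\<lambda>x. 0)"
    and r: "r \<in> l2"
    and orth: "\<And>x. l2_inner r (\<lambda>y. jacobi par lam bet (indicator {x}) y - z * indicator {x} y) = 0"
  shows "r = (\<lambda>x. 0)"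
proof -
  have "jacobi par lam bet r x = r x * cnj z" for x
  proof -
    let ?\<delta> = "indicator {x} :: 'a \<Rightarrow> complex"
    have l2: "jacobi par lam bet ?\<delta> \<in> l2" "(\<lambda>y. z * ?\<delta> y) \<in> l2"
      using fin_supp_l2[OF fin_supp_jacobi[OF T indicator_fin_supp]]
        l2_norm_scale(1)[OF fin_supp_l2[OF indicator_fin_supp]] by auto
    have "l2_inner r (jacobi par lam bet ?\<delta>) = jacobi par lam bet r x"
      by (subst l2_inner_commute) (simp add: l2_inner_jacobi[OF T indicator_fin_supp] l2_inner_indicator_left)
    with orth[of x] show ?thesis
      unfolding l2_inner_diff_right[OF l2 r] l2_inner_indicator_right by simp
  qed
  then have "(\<lambda>x. cnj (r x)) = (\<lambda>x. 0)"
    using r by (intro no_eigen) (auto simp: l2_def jacobi_cnj mult.commute)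
  then show ?thesis by (metis complex_cnj_zero_iff)
qed

text \<open>The range of the closure of \<open>J - z\<close> is closed: by the lower bound \<open>|Im z| \<parallel>f\<parallel> \<le> \<parallel>(J - z) f\<parallel>\<close>,
  convergence of \<open>(J - z) s\<^sub>n\<close> forces convergence of \<open>s\<^sub>n\<close>.\<close>
lemma closure_graph_jacobi_if_tendsto:
  assumes T: "level_tree lev par" and z: "Im z \<noteq> 0"
    and s: "\<And>n. s n \<in> fin_supp" and q: "q \<in> l2"
    and lim: "(\<lambda>n. l2_norm (\<lambda>x. (jacobi par lam bet (s n) x - z * s n x) - q x)) \<longlonglongrightarrow> 0"
  obtains f where "(f, \<lambda>x. q x + z * f x) \<in> closure_graph (jacobi_graph par lam bet)"
proof -
  define m where "m n = (\<lambda>x. jacobi par lam bet (s n) x - z * s n x)" for n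
  have s_l2: "s n \<in> l2" for n using fin_supp_l2[OF s] .
  have m_l2: "m n \<in> l2" for n
    unfolding m_def using fin_supp_l2[OF fin_supp_jacobi[OF T s]] l2_norm_scale(1)[OF s_l2]
    by (rule l2_diff)
  have m_q: "(\<lambda>n. l2_norm (\<lambda>x. m n x - q x)) \<longlonglongrightarrow> 0" using lim by (simp add: m_def)
  have Cauchy: "\<exists>N. \<forall>k\<ge>N. \<forall>n\<ge>N. l2_norm (\<lambda>x. s k x - s n x) < e" if "e > 0" for e
  proof -
    have "0 < \<bar>Im z\<bar>" "0 < \<bar>Im z\<bar> * e" using z \<open>e > 0\<close> by simp_all
    then obtain N where N: "\<forall>k\<ge>N. \<forall>n\<ge>N. l2_norm (\<lambda>x. m k x - m n x) < \<bar>Im z\<bar> * e"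
      using l2_tendsto_Cauchy[OF m_l2 q m_q] by blast
    have lower: "\<bar>Im z\<bar> * l2_norm (\<lambda>x. s k x - s n x) \<le> l2_norm (\<lambda>x. m k x - m n x)" for k n
      using jacobi_lower_bound[OF T fin_supp_linear[OF s s, of 1 k "-1" n]]
      by (simp add: m_def jacobi_diff algebra_simps)
    have "l2_norm (\<lambda>x. s k x - s n x) < e" if "k \<ge> N" "n \<ge> N" for k n
    proof -
      have "\<bar>Im z\<bar> * l2_norm (\<lambda>x. s k x - s n x) < \<bar>Im z\<bar> * e"
        using order_le_less_trans[OF lower[of k n]] N that by blast
      with \<open>0 < \<bar>Im z\<bar>\<close> show ?thesis by simp
    qed
    then show ?thesis by blast
  qed
  obtain f where f: "f \<in> l2" and s_f: "(\<lambda>n. l2_norm (\<lambda>x. s n x - f x)) \<longlonglongrightarrow> 0"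
    using l2_complete[of s, OF s_l2 Cauchy] by blast
  have bound: "l2_norm (\<lambda>x. jacobi par lam bet (s n) x - (q x + z * f x))
      \<le> l2_norm (\<lambda>x. m n x - q x) + cmod z * l2_norm (\<lambda>x. s n x - f x)" for n
  proof -
    have "(\<lambda>x. jacobi par lam bet (s n) x - (q x + z * f x)) = (\<lambda>x. (m n x - q x) + z * (s n x - f x))"
      unfolding m_def by (simp add: algebra_simps)
    then show ?thesis
      using l2_norm_add_le(2)[OF l2_diff[OF m_l2[of n] q] l2_norm_scale(1)[OF l2_diff[OF s_l2[of n] f], of z]]
        l2_norm_scale(2)[OF l2_diff[OF s_l2[of n] f], of z] by simp
  qed
  have majorant: "(\<lambda>n. l2_norm (\<lambda>x. m n x - q x) + cmod z * l2_norm (\<lambda>x. s n x - f x)) \<longlonglongrightarrow> 0"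
    using tendsto_add_zero[OF m_q tendsto_mult_right_zero[OF s_f]] by simp
  have "\<forall>n. norm (l2_norm (\<lambda>x. jacobi par lam bet (s n) x - (q x + z * f x)))
      \<le> l2_norm (\<lambda>x. m n x - q x) + cmod z * l2_norm (\<lambda>x. s n x - f x)"
    using bound by (simp add: abs_of_nonneg l2_norm_nonneg)
  then have Js: "(\<lambda>n. l2_norm (\<lambda>x. jacobi par lam bet (s n) x - (q x + z * f x))) \<longlonglongrightarrow> 0"
    by (rule Lim_null_comparison[OF always_eventually majorant])
  have "(\<lambda>x. q x + z * f x) \<in> l2" using q l2_norm_scale(1)[OF f] by (rule l2_norm_add_le(1))
  with s f s_f Js have "(f, \<lambda>x. q x + z * f x) \<in> closure_graph (jacobi_graph par lam bet)"
    by (intro closure_graph_jacobiI)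
  then show thesis by (rule that)
qed

lemma closure_graph_jacobi_range:
  assumes T: "level_tree lev par" and z: "Im z \<noteq> 0"
    and no_eigen: "\<And>w. w \<in> l2 \<Longrightarrow> (\<And>x. jacobi par lam bet w x = z * w x) \<Longrightarrow> w = (\<lambda>x. 0)"
    and h: "h \<in> l2"
  obtains f where "(f, \<lambda>x. h x + z * f x) \<in> closure_graph (jacobi_graph par lam bet)"
proof -
  define R where "R f = (\<lambda>x. jacobi par lam bet f x - z * f x)" for f
  have R_l2: "R f \<in> l2" if "f \<in> fin_supp" for f
    unfolding R_def using fin_supp_l2[OF fin_supp_jacobi[OF T that]] l2_norm_scale(1)[OF fin_supp_l2[OF that]]
    by (rule l2_diff)
  have R_linear: "(\<lambda>x. a * R f x + b * R g x) = R (\<lambda>x. a * f x + b * g x)" for a b f g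
    unfolding R_def jacobi_linear by (simp add: algebra_simps)
  have "(\<lambda>x. 0) \<in> fin_supp" by (simp add: fin_supp_def)
  with R_l2 have V: "R ` fin_supp \<subseteq> l2" "R ` fin_supp \<noteq> {}" by auto
  have linear: "(\<lambda>x. a * v x + b * w x) \<in> R ` fin_supp"
    if v: "v \<in> R ` fin_supp" and w: "w \<in> R ` fin_supp" for v w a b
  proof -
    obtain f g where "f \<in> fin_supp" "g \<in> fin_supp" "v = R f" "w = R g" using v w by blast
    then have "(\<lambda>x. a * v x + b * w x) = R (\<lambda>x. a * f x + b * g x)" by (simp add: R_linear)
    with \<open>f \<in> fin_supp\<close> \<open>g \<in> fin_supp\<close> show ?thesis by (simp add: fin_supp_linear)
  qed
  obtain m q where m: "\<And>n. m n \<in> R ` fin_supp" and q: "q \<in> l2"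
    and m_q: "(\<lambda>n. l2_norm (\<lambda>x. m n x - q x)) \<longlonglongrightarrow> 0"
    and orth: "\<And>v. v \<in> R ` fin_supp \<Longrightarrow> l2_inner (\<lambda>x. h x - q x) v = 0"
    using l2_projection[OF V linear h] by blast
  have "\<forall>n. \<exists>f. f \<in> fin_supp \<and> m n = R f" using m by blast
  from choice[OF this] obtain s where s: "\<And>n. s n \<in> fin_supp" and m_s: "\<And>n. m n = R (s n)"
    by blast
  have "(\<lambda>n. l2_norm (\<lambda>x. (jacobi par lam bet (s n) x - z * s n x) - q x)) \<longlonglongrightarrow> 0"
    using m_q by (simp add: m_s R_def)
  from closure_graph_jacobi_if_tendsto[where s=s, OF T z s q this]
  obtain f where f: "(f, \<lambda>x. q x + z * f x) \<in> closure_graph (jacobi_graph par lam bet)" .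
  have "(\<lambda>x. h x - q x) = (\<lambda>x. 0)"
  proof (rule orthogonal_range_eq_0[OF T no_eigen l2_diff[OF h q]])
    fix x
    have "l2_inner (\<lambda>x. h x - q x) (R (indicator {x})) = 0"
      by (rule orth) (rule imageI[OF indicator_fin_supp])
    then show "l2_inner (\<lambda>x. h x - q x) (\<lambda>y. jacobi par lam bet (indicator {x}) y - z * indicator {x} y) = 0"
      by (simp add: R_def)
  qed
  then have "q = h" by (auto simp: fun_eq_iff)
  with f that show thesis by blast
qed

lemma adjoint_graph_subset_closure_graph:
  assumes T: "level_tree lev par" and z: "Im z \<noteq> 0"
    and no_eigen: "\<And>w. w \<in> l2 \<Longrightarrow> (\<And>x. jacobi par lam bet w x = z * w x) \<Longrightarrow> w = (\<lambda>x. 0)"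
    and wg: "(w, g) \<in> adjoint_graph (closure_graph (jacobi_graph par lam bet))"
  shows "(w, g) \<in> closure_graph (jacobi_graph par lam bet)"
proof -
  have w: "w \<in> l2" and g: "g \<in> l2"
    and adjoint: "\<And>v h. (v, h) \<in> closure_graph (jacobi_graph par lam bet) \<Longrightarrow> l2_inner h w = l2_inner v g"
    using wg unfolding adjoint_graph_def by auto
  have g_eq: "g x = jacobi par lam bet w x" for x
  proof -
    have "cnj (g x) = l2_inner (jacobi par lam bet (indicator {x})) w"
      using adjoint[OF jacobi_graph_subset_closure[OF T indicator_fin_supp]]
      by (simp add: l2_inner_indicator_left)
    also have "\<dots> = cnj (jacobi par lam bet w x)"
      by (simp add: l2_inner_jacobi[OF T indicator_fin_supp] l2_inner_indicator_left)
    finally show ?thesis by simp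
  qed
  obtain f where f: "(f, \<lambda>x. (g x - z * w x) + z * f x) \<in> closure_graph (jacobi_graph par lam bet)"
    using closure_graph_jacobi_range[OF T z no_eigen l2_diff[OF g l2_norm_scale(1)[OF w]]] by blast
  then have "f \<in> l2" unfolding closure_graph_def by blast
  have f_eq: "(g x - z * w x) + z * f x = jacobi par lam bet f x" for x
    using closure_graph_jacobi_eq[OF T f] by (rule fun_cong)
  have "(\<lambda>x. w x - f x) = (\<lambda>x. 0)"
  proof (rule no_eigen)
    show "(\<lambda>x. w x - f x) \<in> l2" using w \<open>f \<in> l2\<close> by (rule l2_diff)
    show "jacobi par lam bet (\<lambda>x. w x - f x) x = z * (w x - f x)" for x
      unfolding jacobi_diff f_eq[symmetric] g_eq[symmetric] by (simp add: algebra_simps)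
  qed
  then have "w = f" by (auto simp: fun_eq_iff)
  moreover have "g = (\<lambda>x. (g x - z * w x) + z * f x)" using \<open>w = f\<close> by simp
  ultimately show ?thesis using f by simp
qed

lemma essentially_selfadjoint_jacobi:
  assumes T: "level_tree lev par" and z: "Im z \<noteq> 0"
    and no_eigen: "\<And>w. w \<in> l2 \<Longrightarrow> (\<And>x. jacobi par lam bet w x = z * w x) \<Longrightarrow> w = (\<lambda>x. 0)"
  shows "essentially_selfadjoint (jacobi_graph par lam bet)"
  unfolding essentially_selfadjoint_def selfadjoint_graph_def
proof (intro equalityI subsetI)
  fix p assume p: "p \<in> closure_graph (jacobi_graph par lam bet)"
  obtain w g where p_eq: "p = (w, g)" by (cases p)
  have "w \<in> l2" "g \<in> l2" using p unfolding p_eq closure_graph_def by auto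
  moreover have "\<forall>(v, h)\<in>closure_graph (jacobi_graph par lam bet). l2_inner h w = l2_inner v g"
    using closure_graph_jacobi_symmetric[OF T p[unfolded p_eq]] by blast
  ultimately show "p \<in> adjoint_graph (closure_graph (jacobi_graph par lam bet))"
    unfolding adjoint_graph_def p_eq by blast
next
  fix p assume "p \<in> adjoint_graph (closure_graph (jacobi_graph par lam bet))"
  then show "p \<in> closure_graph (jacobi_graph par lam bet)"
    using adjoint_graph_subset_closure_graph[OF T z no_eigen] by (cases p) simp
qed

lemma l2_eigenfunction_if_not_essentially_selfadjoint:
  assumes T: "level_tree lev par" and z: "Im z \<noteq> 0"
    and "\<not> essentially_selfadjoint (jacobi_graph par lam bet)"
  obtains w where "w \<in> l2" "\<And>x. jacobi par lam bet w x = z * w x" "w \<noteq> (\<lambda>x. 0)"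
proof -
  have "\<exists>w\<in>l2. (\<forall>x. jacobi par lam bet w x = z * w x) \<and> w \<noteq> (\<lambda>x. 0)"
  proof (rule ccontr)
    assume "\<not> ?thesis"
    then have "essentially_selfadjoint (jacobi_graph par lam bet)"
      by (intro essentially_selfadjoint_jacobi[OF T z]) blast
    with assms(3) show False by contradiction
  qed
  with that show thesis by blast
qed

section \<open>Square-summability of \<open>u\<close>\<close>

lemma subtree_energy_bound:
  assumes T: "level_tree lev par" and x0: "x0 \<in> subtree par y"
    and eigen: "\<And>x. x \<in> subtree par y \<Longrightarrow> x \<noteq> x0 \<Longrightarrow> jacobi par lam bet g x = z * g x"
    and boundary: "g (par y) = 0"
  shows "\<bar>Im z\<bar> * (\<Sum>x\<in>subtree par y. (cmod (g x))\<^sup>2)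
    \<le> cmod (jacobi par lam bet g x0 - z * g x0) * cmod (g x0)"
proof -
  let ?D = "subtree par y" and ?\<kappa> = "jacobi par lam bet g x0 - z * g x0"
  define S where "S = (\<Sum>x\<in>?D. (cmod (g x))\<^sup>2)"
  have "(\<Sum>x\<in>?D. (jacobi par lam bet g x - z * g x) * cnj (g x))
      = ?\<kappa> * cnj (g x0) + (\<Sum>x\<in>?D - {x0}. (jacobi par lam bet g x - z * g x) * cnj (g x))"
    using sum.remove[OF finite_subtree[OF T] x0] .
  also have "(\<Sum>x\<in>?D - {x0}. (jacobi par lam bet g x - z * g x) * cnj (g x)) = 0"
    using eigen by (intro sum.neutral) simp
  also have "(\<Sum>x\<in>?D. (jacobi par lam bet g x - z * g x) * cnj (g x))
      = (\<Sum>x\<in>?D. jacobi par lam bet g x * cnj (g x)) - z * (\<Sum>x\<in>?D. g x * cnj (g x))"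
    by (simp add: sum_subtractf sum_distrib_left algebra_simps)
  also have "(\<Sum>x\<in>?D. g x * cnj (g x)) = of_real S"
    by (simp only: S_def of_real_sum complex_norm_square)
  finally have "?\<kappa> * cnj (g x0) = (\<Sum>x\<in>?D. jacobi par lam bet g x * cnj (g x)) - z * of_real S"
    by simp
  moreover have "Im (\<Sum>x\<in>?D. jacobi par lam bet g x * cnj (g x)) = 0"
    unfolding Im_jacobi_sum_subtree[OF T] boundary by simp
  ultimately have "\<bar>Im z\<bar> * S = \<bar>Im (?\<kappa> * cnj (g x0))\<bar>"
    by (simp add: abs_mult S_def sum_nonneg)
  also have "\<dots> \<le> cmod (?\<kappa> * cnj (g x0))" by (rule abs_Im_le_cmod)
  also have "\<dots> = cmod ?\<kappa> * cmod (g x0)" by (simp add: norm_mult)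
  finally show ?thesis unfolding S_def .
qed

lemma bounds_from_energy_estimate:
  fixes c K G S :: real
  assumes "c > 0" "K \<ge> 0" "G \<ge> 0" and "G\<^sup>2 \<le> S" and "c * S \<le> K * G"
  shows "G \<le> K / c" and "S \<le> (K / c)\<^sup>2"
proof -
  have "c * G * G \<le> K * G"
    using assms(1,4,5) by (smt (verit) mult_left_mono power2_eq_square mult.assoc)
  then have "c * G \<le> K"
    using assms(2,3) by (cases "G = 0") (auto simp: mult_le_cancel_right)
  then show G: "G \<le> K / c" using assms(1) by (simp add: field_simps)
  have "c * S \<le> K * (K / c)" using G assms(2,5) by (smt (verit) mult_left_mono)
  then show "S \<le> (K / c)\<^sup>2" using assms(1) by (simp add: field_simps power2_eq_square)
qed

lemma l2_if_eigenfunction_off_vertex: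
  assumes T: "level_tree lev par" and z: "Im z \<noteq> 0"
    and w: "w \<in> l2" "\<And>x. jacobi par lam bet w x = z * w x" "w x0 \<noteq> 0"
    and u: "\<And>x. x \<noteq> x0 \<Longrightarrow> jacobi par lam bet u x = z * u x" "u x0 = 0"
  shows "u \<in> l2"
proof -
  define c where "c = \<bar>Im z\<bar>"
  define K where "K = cmod (jacobi par lam bet u x0 - z * u x0)"
  have c: "c > 0" and K: "K \<ge> 0" using z unfolding c_def K_def by simp_all
  have bound: "L2_set (\<lambda>x. cmod (u x)) (subtree par y) \<le> K / c + K / (c * cmod (w x0)) * l2_norm w"
    if x0: "x0 \<in> subtree par y" for y
  proof -
    let ?D = "subtree par y"
    have "w (par y) \<noteq> 0"
    proof
      assume "w (par y) = 0"
      then have "\<forall>x\<in>?D. w x = 0" using w(2) by (rule_tac eigenfunction_vanishes_on_subtree[OF T z]) auto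
      with x0 w(3) show False by blast
    qed
    define a where "a = - u (par y) / w (par y)"
    define g where "g x = u x + a * w x" for x
    have J_g: "jacobi par lam bet g x = jacobi par lam bet u x + a * jacobi par lam bet w x" for x
      unfolding g_def using jacobi_linear[of par lam bet 1 u a w x] by simp
    have "c * (\<Sum>x\<in>?D. (cmod (g x))\<^sup>2) \<le> K * cmod (g x0)"
    proof -
      have "jacobi par lam bet g x = z * g x" if "x \<noteq> x0" for x
        using u(1)[OF that] w(2)[of x] unfolding J_g g_def by (simp add: algebra_simps)
      moreover have "g (par y) = 0" unfolding g_def a_def using \<open>w (par y) \<noteq> 0\<close> by simp
      moreover have "jacobi par lam bet g x0 - z * g x0 = jacobi par lam bet u x0 - z * u x0"
        unfolding J_g g_def w(2) by (simp add: algebra_simps)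
      ultimately show ?thesis
        using subtree_energy_bound[OF T x0, of lam bet g z] unfolding c_def K_def by simp
    qed
    moreover have "(cmod (g x0))\<^sup>2 \<le> (\<Sum>x\<in>?D. (cmod (g x))\<^sup>2)"
      by (rule member_le_sum[OF x0]) (simp_all add: finite_subtree[OF T])
    ultimately have g_x0: "cmod (g x0) \<le> K / c" and "(\<Sum>x\<in>?D. (cmod (g x))\<^sup>2) \<le> (K / c)\<^sup>2"
      using bounds_from_energy_estimate[OF c K norm_ge_zero] by blast+
    then have g_bound: "L2_set (\<lambda>x. cmod (g x)) ?D \<le> K / c"
      unfolding L2_set_def using c K real_sqrt_le_mono by fastforce
    have "cmod a * cmod (w x0) \<le> K / c" using g_x0 u(2) by (simp add: g_def norm_mult)
    then have a_bound: "cmod a \<le> K / (c * cmod (w x0))"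
      using w(3) c by (simp add: field_simps)
    have "L2_set (\<lambda>x. cmod (u x)) ?D \<le> L2_set (\<lambda>x. cmod (g x) + cmod a * cmod (w x)) ?D"
    proof (rule L2_set_mono)
      show "cmod (u x) \<le> cmod (g x) + cmod a * cmod (w x)" for x
        using norm_triangle_ineq4[of "g x" "a * w x"] by (simp add: g_def norm_mult)
    qed simp
    also have "\<dots> \<le> L2_set (\<lambda>x. cmod (g x)) ?D + cmod a * L2_set (\<lambda>x. cmod (w x)) ?D"
      using L2_set_triangle_ineq L2_set_right_distrib[of "cmod a"] by (simp add: L2_set_right_distrib)
    also have "\<dots> \<le> K / c + K / (c * cmod (w x0)) * l2_norm w"
      using g_bound a_bound L2_set_le_l2_norm[OF w(1) finite_subtree[OF T]] c K
      by (intro add_mono mult_mono) (auto simp: L2_set_nonneg)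
    finally show ?thesis .
  qed
  show ?thesis
  proof (rule l2_L2_set_bounded(1))
    fix F :: "'a set" assume "finite F"
    then obtain y where y: "insert x0 F \<subseteq> subtree par y"
      using finite_subset_subtree[OF T, of "insert x0 F"] by auto
    then have "L2_set (\<lambda>x. cmod (u x)) F \<le> L2_set (\<lambda>x. cmod (u x)) (subtree par y)"
      unfolding L2_set_def using finite_subtree[OF T] by (intro real_sqrt_le_mono sum_mono2) auto
    also have "\<dots> \<le> K / c + K / (c * cmod (w x0)) * l2_norm w" using y by (intro bound) auto
    finally show "L2_set (\<lambda>x. cmod (u x)) F \<le> K / c + K / (c * cmod (w x0)) * l2_norm w" .
  qed
qed

theorem theorem5:
  fixes lev :: "'a \<Rightarrow> nat" and par :: "'a \<Rightarrow> 'a"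
    and lam bet :: "'a \<Rightarrow> real" and x0 :: 'a and z :: complex and u :: "'a \<Rightarrow> complex"
  assumes tree: "level_tree lev par"
    and lam_pos: "\<And>x. lam x > 0"
    and not_esa: "\<not> essentially_selfadjoint (jacobi_graph par lam bet)"
    and x0: "lev x0 = 0"
    and z: "Im z \<noteq> 0"
    and u_nz: "u \<noteq> (\<lambda>x. 0)"
    and u_x0: "u x0 = 0"
    and eig: "\<And>x. x \<noteq> x0 \<Longrightarrow> jacobi par lam bet u x = z * u x"
  shows "u \<in> l2"
proof -
  obtain w where w: "w \<in> l2" "\<And>x. jacobi par lam bet w x = z * w x" "w \<noteq> (\<lambda>x. 0)"
    using l2_eigenfunction_if_not_essentially_selfadjoint[OF tree z not_esa] by blast
  have "w x0 \<noteq> 0"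
    using eigenfunction_eq_0[OF tree lam_pos z w(2)] w(3) by blast
  then show ?thesis by (rule l2_if_eigenfunction_off_vertex[OF tree z w(1,2) _ eig u_x0])
qed

end
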